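(* No strategy proof and deterministic mechanism for locating two facilities on $[0,1]$ has approximation ratio smaller than $\frac{30}{29}$ for the optimal complemented Gini index of utilities.
   Context: Agents $1,\dots,n$ report locations $x_1,\dots,x_n\in[0,1]$; a deterministic mechanism maps each profile to a placement of two facilities $y_1,y_2\in[0,1]$. Agent $i$'s distance is $d_i=\min(|x_i-y_1|,|x_i-y_2|)$ and utility $u_i=1-d_i$. The Gini index of utilities is $G_u=\frac{\sum_i\sum_j|u_i-u_j|}{2n\sum_i u_i}$ and the complemented Gini index is $1-G_u$. A mechanism is strategy proof if no agent, by reporting a false location, can strictly reduce the distance from its true location to the nearest facility. The approximation ratio of a mechanism $M$ is the supremum over all profiles $x$ of $\mathrm{OPT}(x)/(1-G_u(M(x)))$, where $\mathrm{OPT}(x)$ is the maximum of $1-G_u$ over all placements of two facilities in $[0,1]$. *)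

theory Defs
  imports Complex_Main "HOL-Library.Extended_Real"
begin

definition valid_profile :: "real list \<Rightarrow> bool" where
  "valid_profile xs \<longleftrightarrow> xs \<noteq> [] \<and> (\<forall>x \<in> set xs. 0 \<le> x \<and> x \<le> 1)"

definition dist_fac :: "real \<Rightarrow> real \<times> real \<Rightarrow> real" where
  "dist_fac x y = min \<bar>x - fst y\<bar> \<bar>x - snd y\<bar>"

definition util :: "real list \<Rightarrow> real \<times> real \<Rightarrow> nat \<Rightarrow> real" where
  "util xs y i = 1 - dist_fac (xs ! i) y"

definition gini :: "real list \<Rightarrow> real \<times> real \<Rightarrow> real" where
  "gini xs y = (let n = length xs in
     (\<Sum>i<n. \<Sum>j<n. \<bar>util xs y i - util xs y j\<bar>) /
       (2 * real n * (\<Sum>i<n. util xs y i)))"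

definition cgini :: "real list \<Rightarrow> real \<times> real \<Rightarrow> real" where
  "cgini xs y = 1 - gini xs y"

definition placements :: "(real \<times> real) set" where
  "placements = {y. 0 \<le> fst y \<and> fst y \<le> 1 \<and> 0 \<le> snd y \<and> snd y \<le> 1}"

definition OPT :: "real list \<Rightarrow> real" where
  "OPT xs = (SUP y \<in> placements. cgini xs y)"

definition mechanism :: "(real list \<Rightarrow> real \<times> real) \<Rightarrow> bool" where
  "mechanism M \<longleftrightarrow> (\<forall>xs. valid_profile xs \<longrightarrow> M xs \<in> placements)"

definition strategy_proof :: "(real list \<Rightarrow> real \<times> real) \<Rightarrow> bool" where
  "strategy_proof M \<longleftrightarrow>
     (\<forall>xs i x'. valid_profile xs \<longrightarrow> i < length xs \<longrightarrow> 0 \<le> x' \<longrightarrow> x' \<le> 1 \<longrightarrow>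
        dist_fac (xs ! i) (M xs) \<le> dist_fac (xs ! i) (M (xs[i := x'])))"

definition approx_ratio :: "(real list \<Rightarrow> real \<times> real) \<Rightarrow> ereal" where
  "approx_ratio M = (SUP xs \<in> {xs. valid_profile xs}. ereal (OPT xs / cgini xs (M xs)))"

end

theory Submission
  imports Defs
begin

text \<open>
  The profiles \<open>P = (0, 1/2, 1)\<close>, \<open>Q\<^sub>1 = (0, 1/2, 3/4)\<close> and \<open>Q\<^sub>2 = (0, 1/4, 1)\<close> each admit a
  placement giving all agents the same utility, so their optimum is \<open>1\<close>, and a ratio below
  \<open>30/29\<close> forces the mechanism's Gini index below \<open>1/30\<close> on each of them. For three agents
  this is a linear condition on the distances, and it forces both \<open>3/4\<close> in \<open>Q\<^sub>1\<close> and \<open>1/4\<close>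
  in \<open>Q\<^sub>2\<close> to be farther than \<open>3/52\<close> from the facilities, whereas in \<open>P\<close> one of \<open>1/4\<close>,
  \<open>3/4\<close> must be within \<open>3/52\<close>. But \<open>P\<close> arises from \<open>Q\<^sub>1\<close> when the agent at \<open>3/4\<close> reports
  \<open>1\<close>, and from \<open>Q\<^sub>2\<close> when the agent at \<open>1/4\<close> reports \<open>1/2\<close>; strategy-proofness says neither
  deviation brings that agent closer to a facility, a contradiction.
\<close>

lemma dist_fac_le_1: "0 \<le> x \<Longrightarrow> x \<le> 1 \<Longrightarrow> y \<in> placements \<Longrightarrow> dist_fac x y \<le> 1"
  unfolding dist_fac_def placements_def by (auto simp: min_def abs_real_def)

lemma dist_fac_less_1: "0 < x \<Longrightarrow> x < 1 \<Longrightarrow> y \<in> placements \<Longrightarrow> dist_fac x y < 1"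
  unfolding dist_fac_def placements_def by (auto simp: min_def abs_real_def)

lemma placements_sortedE:
  assumes "y \<in> placements"
  obtains y1 y2 where "0 \<le> y1" "y1 \<le> y2" "y2 \<le> 1" "\<And>x. dist_fac x y = dist_fac x (y1, y2)"
proof (cases "fst y \<le> snd y")
  case True
  then show ?thesis using assms that[of "fst y" "snd y"] unfolding placements_def by auto
next
  case False
  then show ?thesis using assms that[of "snd y" "fst y"] unfolding placements_def dist_fac_def
    by (auto simp: min.commute)
qed

lemma util_nonneg:
  assumes "valid_profile xs" "y \<in> placements" "i < length xs"
  shows "0 \<le> util xs y i"
  using assms dist_fac_le_1[of "xs ! i" y] unfolding valid_profile_def util_def by simp

lemma gini_nonneg:
  assumes "valid_profile xs" "y \<in> placements"
  shows "0 \<le> gini xs y"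
  using util_nonneg[OF assms] unfolding gini_def Let_def
  by (intro divide_nonneg_nonneg mult_nonneg_nonneg sum_nonneg) auto

lemma gini_less_1:
  assumes "valid_profile xs" "y \<in> placements"
  shows "gini xs y < 1"
proof -
  define n where "n = length xs"
  define u where "u = util xs y"
  define S where "S = (\<Sum>i<n. u i)"
  have u: "\<And>i. i < n \<Longrightarrow> 0 \<le> u i"
    using util_nonneg[OF assms] unfolding n_def u_def by simp
  have gini: "gini xs y = (\<Sum>i<n. \<Sum>j<n. \<bar>u i - u j\<bar>) / (2 * real n * S)"
    unfolding gini_def n_def u_def S_def Let_def ..
  show ?thesis
  proof (cases "S = 0")
    case True
    then show ?thesis unfolding gini by simp
  next
    case False
    then have "0 < S" using u sum_nonneg[of "{..<n}" u] unfolding S_def by fastforce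
    have "\<bar>u i - u j\<bar> \<le> u i + u j - (if i = j then 2 * u i else 0)" if "i < n" "j < n" for i j
      using u[OF that(1)] u[OF that(2)] by auto
    then have "(\<Sum>i<n. \<Sum>j<n. \<bar>u i - u j\<bar>) \<le> (\<Sum>i<n. \<Sum>j<n. u i + u j - (if i = j then 2 * u i else 0))"
      by (intro sum_mono) auto
    also have "\<dots> = 2 * real n * S - 2 * S"
      unfolding S_def by (simp add: sum_subtractf sum.distrib sum_distrib_left algebra_simps)
    finally have "(\<Sum>i<n. \<Sum>j<n. \<bar>u i - u j\<bar>) < 2 * real n * S"
      using \<open>0 < S\<close> by simp
    moreover have "0 < n"
      using False unfolding S_def by (metis lessThan_0 neq0_conv sum.empty)
    ultimately show ?thesis
      unfolding gini using \<open>0 < S\<close> by (simp add: pos_divide_less_eq)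
  qed
qed

lemma cgini_le_OPT:
  assumes "valid_profile xs" "y \<in> placements"
  shows "cgini xs y \<le> OPT xs"
proof -
  have "bdd_above (cgini xs ` placements)"
    using gini_nonneg[OF assms(1)] by (intro bdd_aboveI[of _ 1]) (auto simp: cgini_def)
  then show ?thesis
    unfolding OPT_def using assms(2) by (rule cSUP_upper2) simp
qed

lemma OPT_ge_1:
  assumes "valid_profile xs" "y \<in> placements" "\<forall>x \<in> set xs. dist_fac x y = d"
  shows "1 \<le> OPT xs"
proof -
  have "util xs y i = 1 - d" if "i < length xs" for i
    using assms(3) that unfolding util_def by simp
  then have "gini xs y = 0"
    unfolding gini_def Let_def by simp
  then show ?thesis
    using cgini_le_OPT[OF assms(1,2)] by (simp add: cgini_def)
qed

lemma gini_less_of_approx_ratio_less: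
  assumes "mechanism M" "approx_ratio M < ereal c" "valid_profile xs" "1 \<le> OPT xs"
  shows "gini xs (M xs) < 1 - 1 / c"
proof -
  have y: "M xs \<in> placements"
    using assms(1,3) unfolding mechanism_def by simp
  have "ereal (OPT xs / cgini xs (M xs)) \<le> approx_ratio M"
    unfolding approx_ratio_def using assms(3) by (intro SUP_upper) simp
  then have ratio: "OPT xs / cgini xs (M xs) < c"
    using assms(2) by (metis le_less_trans less_ereal.simps(1))
  have "0 < cgini xs (M xs)"
    using gini_less_1[OF assms(3) y] by (simp add: cgini_def)
  then have "1 < c * cgini xs (M xs)"
    using ratio assms(4) by (simp add: divide_less_eq)
  moreover from this have "0 < c"
    using \<open>0 < cgini xs (M xs)\<close> by (smt (verit) mult_nonpos_nonneg)
  ultimately have "1 / c < cgini xs (M xs)"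
    by (simp add: divide_less_eq mult.commute)
  then show ?thesis
    unfolding cgini_def by simp
qed

lemma gini_three:
  "gini [p, q, r] y =
     (\<bar>dist_fac p y - dist_fac q y\<bar> + \<bar>dist_fac p y - dist_fac r y\<bar> + \<bar>dist_fac q y - dist_fac r y\<bar>)
     / (3 * (3 - dist_fac p y - dist_fac q y - dist_fac r y))"
proof -
  have "gini [p, q, r] y =
     (2 * (\<bar>dist_fac p y - dist_fac q y\<bar> + \<bar>dist_fac p y - dist_fac r y\<bar> + \<bar>dist_fac q y - dist_fac r y\<bar>))
     / (2 * (3 * (3 - dist_fac p y - dist_fac q y - dist_fac r y)))"
    unfolding gini_def util_def Let_def
    by (simp add: eval_nat_numeral abs_minus_commute algebra_simps)
  then show ?thesis
    by (simp only: mult_divide_mult_cancel_left_if) simp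
qed

lemma gini_three_less:
  assumes "y \<in> placements" "0 \<le> p" "p \<le> 1" "0 < q" "q < 1" "0 \<le> r" "r \<le> 1"
    and "gini [p, q, r] y < e"
  shows "\<bar>dist_fac p y - dist_fac q y\<bar> + \<bar>dist_fac p y - dist_fac r y\<bar> + \<bar>dist_fac q y - dist_fac r y\<bar>
    < 3 * e * (3 - dist_fac p y - dist_fac q y - dist_fac r y)"
proof -
  have "0 < 3 - dist_fac p y - dist_fac q y - dist_fac r y"
    using dist_fac_le_1[of p y] dist_fac_less_1[of q y] dist_fac_le_1[of r y] assms(1-7) by simp
  then show ?thesis
    using assms(8) unfolding gini_three by (simp add: pos_divide_less_eq algebra_simps)
qed

lemma far_from_three_quarters_if_nearly_fair:
  assumes "y \<in> placements" "gini [0, 1/2, 3/4] y < 1/30"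
  shows "3/52 < dist_fac (3/4) y"
proof -
  obtain y1 y2 where sorted: "0 \<le> y1" "y1 \<le> y2" "y2 \<le> 1"
    and d: "\<And>x. dist_fac x y = dist_fac x (y1, y2)"
    using placements_sortedE[OF assms(1)] by blast
  have "\<bar>dist_fac 0 y - dist_fac (1/2) y\<bar> + \<bar>dist_fac 0 y - dist_fac (3/4) y\<bar>
      + \<bar>dist_fac (1/2) y - dist_fac (3/4) y\<bar> < 1/10 * (3 - dist_fac 0 y - dist_fac (1/2) y - dist_fac (3/4) y)"
    using gini_three_less[OF assms(1) _ _ _ _ _ _ assms(2)] by simp
  then show ?thesis
    using sorted unfolding d dist_fac_def by (auto simp: min_def abs_real_def split: if_splits)
qed

lemma far_from_quarter_if_nearly_fair:
  assumes "y \<in> placements" "gini [0, 1/4, 1] y < 1/30"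
  shows "3/52 < dist_fac (1/4) y"
proof -
  obtain y1 y2 where sorted: "0 \<le> y1" "y1 \<le> y2" "y2 \<le> 1"
    and d: "\<And>x. dist_fac x y = dist_fac x (y1, y2)"
    using placements_sortedE[OF assms(1)] by blast
  have "\<bar>dist_fac 0 y - dist_fac (1/4) y\<bar> + \<bar>dist_fac 0 y - dist_fac 1 y\<bar>
      + \<bar>dist_fac (1/4) y - dist_fac 1 y\<bar> < 1/10 * (3 - dist_fac 0 y - dist_fac (1/4) y - dist_fac 1 y)"
    using gini_three_less[OF assms(1) _ _ _ _ _ _ assms(2)] by simp
  then show ?thesis
    using sorted unfolding d dist_fac_def by (auto simp: min_def abs_real_def split: if_splits)
qed

lemma near_quarter_or_three_quarters_if_nearly_fair:
  assumes "y \<in> placements" "gini [0, 1/2, 1] y < 1/30"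
  shows "dist_fac (1/4) y \<le> 3/52 \<or> dist_fac (3/4) y \<le> 3/52"
proof -
  obtain y1 y2 where sorted: "0 \<le> y1" "y1 \<le> y2" "y2 \<le> 1"
    and d: "\<And>x. dist_fac x y = dist_fac x (y1, y2)"
    using placements_sortedE[OF assms(1)] by blast
  have "\<bar>dist_fac 0 y - dist_fac (1/2) y\<bar> + \<bar>dist_fac 0 y - dist_fac 1 y\<bar>
      + \<bar>dist_fac (1/2) y - dist_fac 1 y\<bar> < 1/10 * (3 - dist_fac 0 y - dist_fac (1/2) y - dist_fac 1 y)"
    using gini_three_less[OF assms(1) _ _ _ _ _ _ assms(2)] by simp
  then show ?thesis
    using sorted unfolding d dist_fac_def by (auto simp: min_def abs_real_def split: if_splits)
qed

theorem theorem8: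
  fixes M :: "real list \<Rightarrow> real \<times> real"
  assumes "mechanism M" and "strategy_proof M"
  shows "approx_ratio M \<ge> ereal (30 / 29)"
proof (rule ccontr)
  assume "\<not> approx_ratio M \<ge> ereal (30 / 29)"
  then have ratio: "approx_ratio M < ereal (30 / 29)"
    by simp
  have nearly_fair: "gini xs (M xs) < 1/30" if "valid_profile xs" "1 \<le> OPT xs" for xs
    using gini_less_of_approx_ratio_less[OF assms(1) ratio that] by simp
  have valid: "valid_profile [0, 1/2, 1]" "valid_profile [0, 1/2, 3/4]" "valid_profile [0, 1/4, 1]"
    unfolding valid_profile_def by auto
  then have placed: "M [0, 1/2, 1] \<in> placements" "M [0, 1/2, 3/4] \<in> placements" "M [0, 1/4, 1] \<in> placements"
    using assms(1) unfolding mechanism_def by auto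
  have "1 \<le> OPT [0, 1/2, 1]"
    using valid by (intro OPT_ge_1[of _ "(1/4, 3/4)" "1/4"]) (auto simp: placements_def dist_fac_def)
  moreover have "1 \<le> OPT [0, 1/2, 3/4]"
    using valid by (intro OPT_ge_1[of _ "(1/8, 5/8)" "1/8"]) (auto simp: placements_def dist_fac_def)
  moreover have "1 \<le> OPT [0, 1/4, 1]"
    using valid by (intro OPT_ge_1[of _ "(1/8, 7/8)" "1/8"]) (auto simp: placements_def dist_fac_def)
  moreover have "dist_fac (3/4) (M [0, 1/2, 3/4]) \<le> dist_fac (3/4) (M [0, 1/2, 1])"
    using assms(2)[unfolded strategy_proof_def, rule_format, of "[0, 1/2, 3/4]" 2 1] valid by simp
  moreover have "dist_fac (1/4) (M [0, 1/4, 1]) \<le> dist_fac (1/4) (M [0, 1/2, 1])"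
    using assms(2)[unfolded strategy_proof_def, rule_format, of "[0, 1/4, 1]" 1 "1/2"] valid by simp
  ultimately show False
    using far_from_three_quarters_if_nearly_fair[OF placed(2)] far_from_quarter_if_nearly_fair[OF placed(3)]
      near_quarter_or_three_quarters_if_nearly_fair[OF placed(1)] nearly_fair valid by fastforce
qed

end
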